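(* For every quandle $X$ and every subquandle $M\subseteq X$, the regular closure $c^{reg}_X(M)$ associated with the reflection $\pi_0\dashv U$ coincides with the pullback closure $c_X(M)$.
   Context: A quandle is a set $X$ with two binary operations $\lhd,\lhd^{-1}$ satisfying, for all $x,y,z\in X$: $x\lhd x = x = x\lhd^{-1}x$; $(x\lhd y)\lhd^{-1}y = x = (x\lhd^{-1}y)\lhd y$; $(x\lhd y)\lhd z = (x\lhd z)\lhd(y\lhd z)$ and $(x\lhd^{-1}y)\lhd^{-1}z = (x\lhd^{-1}z)\lhd^{-1}(y\lhd^{-1}z)$. Homomorphisms preserve both operations; $\mathsf{Qnd}$ is the resulting category. A quandle is trivial if $x\lhd y = x = x\lhd^{-1}y$ for all $x,y$; these form the full subcategory $\mathsf{Qnd}^*$, with inclusion $U$. For $x\in X$, the orbit $[x]_X$ is the set of all elements $x\lhd^{\alpha_1}x_1\cdots\lhd^{\alpha_n}x_n$ ($n\ge 0$, $x_i\in X$, $\lhd^{\alpha_i}\in\{\lhd,\lhd^{-1}\}$, bracketed from the left). The functor $\pi_0\colon\mathsf{Qnd}\to\mathsf{Qnd}^*$ sends $X$ to the trivial quandle of its orbits and is left adjoint to $U$, with unit $\eta_X\colon X\to U\pi_0(X)$, $x\mapsto[x]_X$. The pullback closure operator $c$: for a subquandle $M\subseteq X$ with inclusion $m$, $c_X(M)$ is the inverse image under $\eta_X$ of the image of $U\pi_0(m)$. The regular closure $c^{reg}_X(M)$ is the equalizer of $\eta_{X+_MX}\circ i$ and $\eta_{X+_MX}\circ j$, where $i,j\colon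 X\to X+_MX$ is the cokernel pair (pushout of $m$ along itself) of the inclusion $m\colon M\to X$ in $\mathsf{Qnd}$. *)

theory Defs
  imports Main
begin

record 'a qnd =
  qcarrier :: "'a set"
  qop :: "'a \<Rightarrow> 'a \<Rightarrow> 'a"
  qinv :: "'a \<Rightarrow> 'a \<Rightarrow> 'a"

definition quandle :: "('a, 'b) qnd_scheme \<Rightarrow> bool" where
  "quandle X \<longleftrightarrow>
     (\<forall>x\<in>qcarrier X. \<forall>y\<in>qcarrier X. qop X x y \<in> qcarrier X \<and> qinv X x y \<in> qcarrier X) \<and>
     (\<forall>x\<in>qcarrier X. qop X x x = x \<and> qinv X x x = x) \<and>
     (\<forall>x\<in>qcarrier X. \<forall>y\<in>qcarrier X. qinv X (qop X x y) y = x \<and> qop X (qinv X x y) y = x) \<and>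
     (\<forall>x\<in>qcarrier X. \<forall>y\<in>qcarrier X. \<forall>z\<in>qcarrier X.
        qop X (qop X x y) z = qop X (qop X x z) (qop X y z) \<and>
        qinv X (qinv X x y) z = qinv X (qinv X x z) (qinv X y z))"

definition subquandle :: "'a set \<Rightarrow> ('a, 'b) qnd_scheme \<Rightarrow> bool" where
  "subquandle M X \<longleftrightarrow> M \<subseteq> qcarrier X \<and>
     (\<forall>x\<in>M. \<forall>y\<in>M. qop X x y \<in> M \<and> qinv X x y \<in> M)"

definition orbit_step :: "('a, 'b) qnd_scheme \<Rightarrow> ('a \<times> 'a) set" where
  "orbit_step X = {(a, qop X a b) | a b. a \<in> qcarrier X \<and> b \<in> qcarrier X} \<union>
                  {(a, qinv X a b) | a b. a \<in> qcarrier X \<and> b \<in> qcarrier X}"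

text \<open>The orbit [x]_X: all x op^{a1} x1 ... op^{an} xn; this is eta_X x.\<close>
definition orbit :: "('a, 'b) qnd_scheme \<Rightarrow> 'a \<Rightarrow> 'a set" where
  "orbit X x = {y. (x, y) \<in> (orbit_step X)\<^sup>*}"

text \<open>c_X(M) = eta_X^{-1}(image of U pi_0(m)), where U pi_0(m) sends [m]_M to [m]_X.\<close>
definition pb_closure :: "('a, 'b) qnd_scheme \<Rightarrow> 'a set \<Rightarrow> 'a set" where
  "pb_closure X M = {x \<in> qcarrier X. orbit X x \<in> orbit X ` M}"

section \<open>Cokernel pair X +_M X in Qnd (pushout of the inclusion along itself),
  constructed as a presented quandle\<close>

datatype 'g qterm = Gen 'g | Lop "'g qterm" "'g qterm" | Linv "'g qterm" "'g qterm"

inductive_set wf_terms :: "('a, 'b) qnd_scheme \<Rightarrow> ('a + 'a) qterm set" for X where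
  gen_l: "x \<in> qcarrier X \<Longrightarrow> Gen (Inl x) \<in> wf_terms X"
| gen_r: "x \<in> qcarrier X \<Longrightarrow> Gen (Inr x) \<in> wf_terms X"
| lop: "a \<in> wf_terms X \<Longrightarrow> b \<in> wf_terms X \<Longrightarrow> Lop a b \<in> wf_terms X"
| linv: "a \<in> wf_terms X \<Longrightarrow> b \<in> wf_terms X \<Longrightarrow> Linv a b \<in> wf_terms X"

text \<open>The least quandle congruence on terms over two copies of X that makes both
  copies homomorphic images of X and identifies the two copies of each element of M.\<close>
inductive_set po_cong :: "('a, 'b) qnd_scheme \<Rightarrow> 'a set \<Rightarrow> (('a + 'a) qterm \<times> ('a + 'a) qterm) set"
  for X M where
  refl: "a \<in> wf_terms X \<Longrightarrow> (a, a) \<in> po_cong X M"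
| sym: "(a, b) \<in> po_cong X M \<Longrightarrow> (b, a) \<in> po_cong X M"
| trans: "(a, b) \<in> po_cong X M \<Longrightarrow> (b, c) \<in> po_cong X M \<Longrightarrow> (a, c) \<in> po_cong X M"
| cong_op: "(a, a') \<in> po_cong X M \<Longrightarrow> (b, b') \<in> po_cong X M \<Longrightarrow> (Lop a b, Lop a' b') \<in> po_cong X M"
| cong_inv: "(a, a') \<in> po_cong X M \<Longrightarrow> (b, b') \<in> po_cong X M \<Longrightarrow> (Linv a b, Linv a' b') \<in> po_cong X M"
| idem_op: "a \<in> wf_terms X \<Longrightarrow> (Lop a a, a) \<in> po_cong X M"
| idem_inv: "a \<in> wf_terms X \<Longrightarrow> (Linv a a, a) \<in> po_cong X M"
| right_inv1: "a \<in> wf_terms X \<Longrightarrow> b \<in> wf_terms X \<Longrightarrow> (Linv (Lop a b) b, a) \<in> po_cong X M"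
| right_inv2: "a \<in> wf_terms X \<Longrightarrow> b \<in> wf_terms X \<Longrightarrow> (Lop (Linv a b) b, a) \<in> po_cong X M"
| dist_op: "a \<in> wf_terms X \<Longrightarrow> b \<in> wf_terms X \<Longrightarrow> c \<in> wf_terms X \<Longrightarrow>
     (Lop (Lop a b) c, Lop (Lop a c) (Lop b c)) \<in> po_cong X M"
| dist_inv: "a \<in> wf_terms X \<Longrightarrow> b \<in> wf_terms X \<Longrightarrow> c \<in> wf_terms X \<Longrightarrow>
     (Linv (Linv a b) c, Linv (Linv a c) (Linv b c)) \<in> po_cong X M"
| hom_l_op: "x \<in> qcarrier X \<Longrightarrow> y \<in> qcarrier X \<Longrightarrow>
     (Gen (Inl (qop X x y)), Lop (Gen (Inl x)) (Gen (Inl y))) \<in> po_cong X M"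
| hom_l_inv: "x \<in> qcarrier X \<Longrightarrow> y \<in> qcarrier X \<Longrightarrow>
     (Gen (Inl (qinv X x y)), Linv (Gen (Inl x)) (Gen (Inl y))) \<in> po_cong X M"
| hom_r_op: "x \<in> qcarrier X \<Longrightarrow> y \<in> qcarrier X \<Longrightarrow>
     (Gen (Inr (qop X x y)), Lop (Gen (Inr x)) (Gen (Inr y))) \<in> po_cong X M"
| hom_r_inv: "x \<in> qcarrier X \<Longrightarrow> y \<in> qcarrier X \<Longrightarrow>
     (Gen (Inr (qinv X x y)), Linv (Gen (Inr x)) (Gen (Inr y))) \<in> po_cong X M"
| glue: "m \<in> M \<Longrightarrow> (Gen (Inl m), Gen (Inr m)) \<in> po_cong X M"

definition cokernel_pair :: "('a, 'b) qnd_scheme \<Rightarrow> 'a set \<Rightarrow> ('a + 'a) qterm set qnd" where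
  "cokernel_pair X M =
     \<lparr> qcarrier = {po_cong X M `` {t} | t. t \<in> wf_terms X},
       qop = (\<lambda>A B. po_cong X M `` {Lop (SOME a. a \<in> A) (SOME b. b \<in> B)}),
       qinv = (\<lambda>A B. po_cong X M `` {Linv (SOME a. a \<in> A) (SOME b. b \<in> B)}) \<rparr>"

definition cp_i :: "('a, 'b) qnd_scheme \<Rightarrow> 'a set \<Rightarrow> 'a \<Rightarrow> ('a + 'a) qterm set" where
  "cp_i X M x = po_cong X M `` {Gen (Inl x)}"

definition cp_j :: "('a, 'b) qnd_scheme \<Rightarrow> 'a set \<Rightarrow> 'a \<Rightarrow> ('a + 'a) qterm set" where
  "cp_j X M x = po_cong X M `` {Gen (Inr x)}"

text \<open>Equalizer of eta_{X+_M X} o i and eta_{X+_M X} o j.\<close>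
definition reg_closure :: "('a, 'b) qnd_scheme \<Rightarrow> 'a set \<Rightarrow> 'a set" where
  "reg_closure X M = {x \<in> qcarrier X.
      orbit (cokernel_pair X M) (cp_i X M x) = orbit (cokernel_pair X M) (cp_j X M x)}"

end

theory Submission
  imports Defs
begin

text \<open>Since the coprojections i, j are homomorphisms
  agreeing on M, they carry the orbit of any m \<in> M onto a common orbit, so
  c_X(M) \<subseteq> c^reg_X(M). Conversely, the leftmost generator of a term, sent to
  the pushout of orbit sets pi_0 X +_{pi_0 M} pi_0 X, is invariant under the defining
  congruence of X +_M X and under both operations with any right argument; hence it is
  constant on orbits of X +_M X, and i x, j x can only share an orbit when the orbit of x
  meets M.\<close>

lemma orbit_eq_iff:
  "orbit Y u = orbit Y v \<longleftrightarrow> (u, v) \<in> (orbit_step Y)\<^sup>* \<and> (v, u) \<in> (orbit_step Y)\<^sup>*"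
  unfolding orbit_def by (auto intro: rtrancl_trans)

lemma orbit_qop_qinv:
  assumes "quandle X" "x \<in> qcarrier X" "y \<in> qcarrier X"
  shows "orbit X (qop X x y) = orbit X x" "orbit X (qinv X x y) = orbit X x"
proof -
  have closed: "qop X x y \<in> qcarrier X" "qinv X x y \<in> qcarrier X"
    and cancel: "qinv X (qop X x y) y = x" "qop X (qinv X x y) y = x"
    using assms unfolding quandle_def by auto
  have "(x, qop X x y) \<in> orbit_step X" "(x, qinv X x y) \<in> orbit_step X"
    "(qop X x y, qinv X (qop X x y) y) \<in> orbit_step X"
    "(qinv X x y, qop X (qinv X x y) y) \<in> orbit_step X"
    using assms(2,3) closed unfolding orbit_step_def by blast+
  then show "orbit X (qop X x y) = orbit X x" "orbit X (qinv X x y) = orbit X x"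
    unfolding orbit_eq_iff using cancel by auto
qed

definition quandle_hom :: "('a, 'b) qnd_scheme \<Rightarrow> ('c, 'd) qnd_scheme \<Rightarrow> ('a \<Rightarrow> 'c) \<Rightarrow> bool" where
  "quandle_hom X Y f \<longleftrightarrow> f ` qcarrier X \<subseteq> qcarrier Y \<and>
     (\<forall>x\<in>qcarrier X. \<forall>y\<in>qcarrier X.
        f (qop X x y) = qop Y (f x) (f y) \<and> f (qinv X x y) = qinv Y (f x) (f y))"

lemma quandle_hom_orbit_step:
  assumes "quandle_hom X Y f" "(x, y) \<in> orbit_step X"
  shows "(f x, f y) \<in> orbit_step Y"
  using assms unfolding quandle_hom_def orbit_step_def by (auto 0 4)

lemma quandle_hom_orbit_step_rtrancl:
  assumes "quandle_hom X Y f" "(x, y) \<in> (orbit_step X)\<^sup>*"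
  shows "(f x, f y) \<in> (orbit_step Y)\<^sup>*"
  using assms(2)
  by induction (auto intro: rtrancl_into_rtrancl quandle_hom_orbit_step[OF assms(1)])

lemma quandle_hom_orbit_eq:
  assumes "quandle_hom X Y f" "orbit X x = orbit X y"
  shows "orbit Y (f x) = orbit Y (f y)"
  using assms by (simp add: orbit_eq_iff quandle_hom_orbit_step_rtrancl)

lemma po_cong_Image_eq: "(a, b) \<in> po_cong X M \<Longrightarrow> po_cong X M `` {a} = po_cong X M `` {b}"
  by (auto intro: po_cong.trans po_cong.sym)

lemma po_cong_some_in_Image:
  assumes "a \<in> wf_terms X"
  shows "(a, SOME t. t \<in> po_cong X M `` {a}) \<in> po_cong X M"
proof -
  have "a \<in> po_cong X M `` {a}" using assms by (simp add: po_cong.refl)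
  then have "(SOME t. t \<in> po_cong X M `` {a}) \<in> po_cong X M `` {a}" by (rule someI)
  then show ?thesis by simp
qed

lemma cokernel_pair_qop_qinv:
  assumes "a \<in> wf_terms X" "b \<in> wf_terms X"
  shows "qop (cokernel_pair X M) (po_cong X M `` {a}) (po_cong X M `` {b}) = po_cong X M `` {Lop a b}"
    and "qinv (cokernel_pair X M) (po_cong X M `` {a}) (po_cong X M `` {b}) = po_cong X M `` {Linv a b}"
proof -
  let ?a = "SOME t. t \<in> po_cong X M `` {a}" and ?b = "SOME t. t \<in> po_cong X M `` {b}"
  have "(?a, a) \<in> po_cong X M" "(?b, b) \<in> po_cong X M"
    using po_cong_some_in_Image[OF assms(1), of M] po_cong_some_in_Image[OF assms(2), of M]
    by (blast intro: po_cong.sym)+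
  then have "(Lop ?a ?b, Lop a b) \<in> po_cong X M" "(Linv ?a ?b, Linv a b) \<in> po_cong X M"
    by (auto intro: po_cong.cong_op po_cong.cong_inv)
  then show "qop (cokernel_pair X M) (po_cong X M `` {a}) (po_cong X M `` {b}) = po_cong X M `` {Lop a b}"
    and "qinv (cokernel_pair X M) (po_cong X M `` {a}) (po_cong X M `` {b}) = po_cong X M `` {Linv a b}"
    unfolding cokernel_pair_def by (simp_all add: po_cong_Image_eq)
qed

lemma quandle_hom_cp_i: "quandle_hom X (cokernel_pair X M) (cp_i X M)"
  unfolding quandle_hom_def
proof (intro conjI ballI)
  show "cp_i X M ` qcarrier X \<subseteq> qcarrier (cokernel_pair X M)"
    by (auto simp: cp_i_def cokernel_pair_def intro: wf_terms.gen_l)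
  fix x y assume "x \<in> qcarrier X" "y \<in> qcarrier X"
  then have gens: "Gen (Inl x) \<in> wf_terms X" "Gen (Inl y) \<in> wf_terms X"
    by (auto intro: wf_terms.gen_l)
  show "cp_i X M (qop X x y) = qop (cokernel_pair X M) (cp_i X M x) (cp_i X M y)"
    "cp_i X M (qinv X x y) = qinv (cokernel_pair X M) (cp_i X M x) (cp_i X M y)"
    unfolding cp_i_def cokernel_pair_qop_qinv[OF gens]
    using \<open>x \<in> qcarrier X\<close> \<open>y \<in> qcarrier X\<close>
    by (simp_all add: po_cong_Image_eq po_cong.hom_l_op po_cong.hom_l_inv)
qed

lemma quandle_hom_cp_j: "quandle_hom X (cokernel_pair X M) (cp_j X M)"
  unfolding quandle_hom_def
proof (intro conjI ballI)
  show "cp_j X M ` qcarrier X \<subseteq> qcarrier (cokernel_pair X M)"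
    by (auto simp: cp_j_def cokernel_pair_def intro: wf_terms.gen_r)
  fix x y assume "x \<in> qcarrier X" "y \<in> qcarrier X"
  then have gens: "Gen (Inr x) \<in> wf_terms X" "Gen (Inr y) \<in> wf_terms X"
    by (auto intro: wf_terms.gen_r)
  show "cp_j X M (qop X x y) = qop (cokernel_pair X M) (cp_j X M x) (cp_j X M y)"
    "cp_j X M (qinv X x y) = qinv (cokernel_pair X M) (cp_j X M x) (cp_j X M y)"
    unfolding cp_j_def cokernel_pair_qop_qinv[OF gens]
    using \<open>x \<in> qcarrier X\<close> \<open>y \<in> qcarrier X\<close>
    by (simp_all add: po_cong_Image_eq po_cong.hom_r_op po_cong.hom_r_inv)
qed

lemma pb_closure_subset_reg_closure: "pb_closure X M \<subseteq> reg_closure X M"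
proof
  fix x assume "x \<in> pb_closure X M"
  then obtain m where x: "x \<in> qcarrier X" and "m \<in> M" and orbit_x: "orbit X x = orbit X m"
    unfolding pb_closure_def by auto
  let ?Y = "cokernel_pair X M"
  have "cp_i X M m = cp_j X M m"
    unfolding cp_i_def cp_j_def using \<open>m \<in> M\<close> by (rule po_cong_Image_eq[OF po_cong.glue])
  then have "orbit ?Y (cp_i X M x) = orbit ?Y (cp_j X M m)"
    using quandle_hom_orbit_eq[OF quandle_hom_cp_i orbit_x] by simp
  also have "\<dots> = orbit ?Y (cp_j X M x)"
    using quandle_hom_orbit_eq[OF quandle_hom_cp_j orbit_x] by simp
  finally show "x \<in> reg_closure X M" using x unfolding reg_closure_def by simp
qed

fun qterm_head :: "'g qterm \<Rightarrow> 'g" where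
  "qterm_head (Gen g) = g"
| "qterm_head (Lop a b) = qterm_head a"
| "qterm_head (Linv a b) = qterm_head a"

lemma cokernel_pair_orbit_invariant:
  assumes respects: "\<And>a b. (a, b) \<in> po_cong X M \<Longrightarrow> \<phi> a = \<phi> b"
    and head: "\<And>a b. \<phi> (Lop a b) = \<phi> a" "\<And>a b. \<phi> (Linv a b) = \<phi> a"
    and "A \<in> qcarrier (cokernel_pair X M)" "a \<in> A"
    and "(A, B) \<in> (orbit_step (cokernel_pair X M))\<^sup>*" "b \<in> B"
  shows "\<phi> a = \<phi> b"
  using assms(6,7)
proof (induction arbitrary: b rule: rtrancl_induct)
  case base
  with \<open>A \<in> qcarrier (cokernel_pair X M)\<close> \<open>a \<in> A\<close> show ?case
    by (auto simp: cokernel_pair_def dest!: respects)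
next
  case (step B C)
  let ?b = "SOME t. t \<in> B"
  obtain D where "B \<in> qcarrier (cokernel_pair X M)"
    and C: "C = po_cong X M `` {Lop ?b (SOME t. t \<in> D)} \<or> C = po_cong X M `` {Linv ?b (SOME t. t \<in> D)}"
    using step.hyps(2) unfolding orbit_step_def by (auto simp: cokernel_pair_def)
  then have "?b \<in> B"
    by (auto simp: cokernel_pair_def intro: po_cong_some_in_Image)
  then have "\<phi> a = \<phi> ?b" by (rule step.IH)
  also have "\<dots> = \<phi> b"
    using C step.prems by (auto simp: head dest: respects)
  finally show ?case .
qed

text \<open>The image of a generator in pi_0 X +_{pi_0 M} pi_0 X: None marks the glued
  orbits (those meeting M), Some True/False the left/right copy of any other orbit.\<close>
definition glued_orbit :: "('a, 'b) qnd_scheme \<Rightarrow> 'a set \<Rightarrow> 'a + 'a \<Rightarrow> bool option \<times> 'a set" where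
  "glued_orbit X M g = (let y = case_sum id id g in
     (if orbit X y \<in> orbit X ` M then None else Some (isl g), orbit X y))"

lemma glued_orbit_head_respects_po_cong:
  assumes "quandle X" "(a, b) \<in> po_cong X M"
  shows "glued_orbit X M (qterm_head a) = glued_orbit X M (qterm_head b)"
  using assms(2)
  by induction (auto simp: glued_orbit_def orbit_qop_qinv[OF assms(1)])

lemma reg_closure_subset_pb_closure:
  assumes "quandle X"
  shows "reg_closure X M \<subseteq> pb_closure X M"
proof
  fix x assume "x \<in> reg_closure X M"
  then have x: "x \<in> qcarrier X"
    and same_orbit: "orbit (cokernel_pair X M) (cp_i X M x) = orbit (cokernel_pair X M) (cp_j X M x)"
    unfolding reg_closure_def by auto
  have steps: "(cp_i X M x, cp_j X M x) \<in> (orbit_step (cokernel_pair X M))\<^sup>*"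
    using same_orbit unfolding orbit_eq_iff by (rule conjunct1)
  have gens: "Gen (Inl x) \<in> cp_i X M x" "Gen (Inr x) \<in> cp_j X M x"
    using x by (simp_all add: cp_i_def cp_j_def po_cong.refl wf_terms.gen_l wf_terms.gen_r)
  have class_x: "cp_i X M x \<in> qcarrier (cokernel_pair X M)"
    unfolding cp_i_def cokernel_pair_def using x by (auto intro: wf_terms.gen_l)
  have "glued_orbit X M (qterm_head (Gen (Inl x))) = glued_orbit X M (qterm_head (Gen (Inr x)))"
    by (rule cokernel_pair_orbit_invariant[where \<phi> = "\<lambda>t. glued_orbit X M (qterm_head t)",
          OF glued_orbit_head_respects_po_cong[OF assms] _ _ class_x gens(1) steps gens(2)])
      simp_all
  then have "orbit X x \<in> orbit X ` M"
    unfolding glued_orbit_def by (auto split: if_splits)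
  with x show "x \<in> pb_closure X M" unfolding pb_closure_def by simp
qed

theorem mainTheorem5:
  fixes X :: "'a qnd" and M :: "'a set"
  assumes "quandle X" and "subquandle M X"
  shows "reg_closure X M = pb_closure X M"
  using reg_closure_subset_pb_closure[OF assms(1)] pb_closure_subset_reg_closure by (rule equalityI)

end
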